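(* Suppose Assumptions 1, 2 and 4 hold, let $R\ge1$, and run gradient descent with constant step size $\eta_t=1/\beta(R)$, where $\beta(R)=2L^2R^{2L-2}(\beta+G)$. Then there exists a time $t$ with $W(t)\notin B(R)$, i.e. $\max_{1\le k\le L}\|W_k(t)\|_F>R$.
   Context: Setting: data $(x_i,y_i)_{i=1}^n$ with $x_i\in\mathbb{R}^d$, $\|x_i\|\le 1$, $y_i\in\{-1,+1\}$; $z_i:=y_ix_i$; the data are linearly separable. A depth-$L$ linear network is $W=(W_L,\dots,W_1)$ with $W_k\in\mathbb{R}^{d_k\times d_{k-1}}$, $d_0=d$, $d_L=1$, $w_{\mathrm{prod}}:=(W_L\cdots W_1)^\top$, and $\mathcal{R}(W)=\frac1n\sum_{i=1}^n\ell(\langle w_{\mathrm{prod}},z_i\rangle)$. $B(R):=\{W:\max_k\|W_k\|_F\le R\}$. Gradient descent: $W(t+1)=W(t)-\eta_t\nabla\mathcal{R}(W(t))$, $t=0,1,2,\dots$. Assumption 1: $\ell$ is continuously differentiable, $\ell'<0$ everywhere, $\lim_{x\to-\infty}\ell(x)=\infty$, $\lim_{x\to\infty}\ell(x)=0$. Assumption 2: $\nabla\mathcal{R}(W(0))\ne0$ and $\mathcal{R}(W(0))\le\ell(0)$. Assumption 4: $\ell'$ is $\beta$-Lipschitz and $|\ell'|\le G$. *)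

theory Defs
  imports "HOL-Analysis.Analysis"
begin

text \<open>A depth-L linear network is represented by W :: nat => nat => nat => real,
  where W k i j is entry (i,j) of the layer matrix W_k (k in 1..L, i < dm k, j < dm (k-1)).
  Dimensions are dm :: nat => nat with dm 0 = d, dm L = 1.\<close>

type_synonym network = "nat \<Rightarrow> nat \<Rightarrow> nat \<Rightarrow> real"

primrec mprod :: "(nat \<Rightarrow> nat) \<Rightarrow> network \<Rightarrow> nat \<Rightarrow> nat \<Rightarrow> nat \<Rightarrow> real" where
  "mprod dm W 0 i j = (if i = j then 1 else 0)"
| "mprod dm W (Suc k) i j = (\<Sum>m<dm k. W (Suc k) i m * mprod dm W k m j)"

text \<open>w_prod = (W_L ... W_1)^T, a vector in R^d (component j).\<close>
definition wprod :: "(nat \<Rightarrow> nat) \<Rightarrow> nat \<Rightarrow> network \<Rightarrow> nat \<Rightarrow> real" where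
  "wprod dm L W j = mprod dm W L 0 j"

definition risk :: "(real \<Rightarrow> real) \<Rightarrow> nat \<Rightarrow> (nat \<Rightarrow> nat \<Rightarrow> real) \<Rightarrow> (nat \<Rightarrow> nat) \<Rightarrow> nat \<Rightarrow> network \<Rightarrow> real" where
  "risk l n z dm L W = (1 / real n) * (\<Sum>i<n. l (\<Sum>j<dm 0. wprod dm L W j * z i j))"

definition upd_entry :: "network \<Rightarrow> nat \<Rightarrow> nat \<Rightarrow> nat \<Rightarrow> real \<Rightarrow> network" where
  "upd_entry W k i j s = W(k := (W k)(i := (W k i)(j := s)))"

definition grad_entry :: "(network \<Rightarrow> real) \<Rightarrow> network \<Rightarrow> nat \<Rightarrow> nat \<Rightarrow> nat \<Rightarrow> real" where
  "grad_entry f W k i j = deriv (\<lambda>s. f (upd_entry W k i j s)) (W k i j)"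

definition frob :: "(nat \<Rightarrow> nat) \<Rightarrow> network \<Rightarrow> nat \<Rightarrow> real" where
  "frob dm W k = sqrt (\<Sum>i<dm k. \<Sum>j<dm (k - 1). (W k i j)\<^sup>2)"

definition betaR :: "nat \<Rightarrow> real \<Rightarrow> real \<Rightarrow> real \<Rightarrow> real" where
  "betaR L R \<beta> G = 2 * (real L)\<^sup>2 * R ^ (2 * L - 2) * (\<beta> + G)"

end

theory Submission
  imports Defs
begin

text \<open>If all iterates stayed in \<open>B(R)\<close>, gradient descent would decrease the risk forever by a
  uniform amount, contradicting \<open>\<R> \<ge> 0\<close>. Along a segment in the convex set \<open>B(R)\<close> the network
  output has first derivative at most \<open>R\<^sup>L\<^sup>-\<^sup>1 \<Sigma>\<^sub>k \<parallel>D\<^sub>k\<parallel>\<close> and second derivative at most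
  \<open>2 R\<^sup>L\<^sup>-\<^sup>1 (\<Sigma>\<^sub>k \<parallel>D\<^sub>k\<parallel>)\<^sup>2\<close>, so the risk is \<open>\<beta>(R)\<close>-smooth there and every step decreases it by
  at least \<open>\<parallel>\<nabla>\<R>\<parallel>\<^sup>2 / (2 \<beta>(R))\<close>. Since \<open>\<nabla>\<R>(W(0)) \<noteq> 0\<close>, after one step the risk is below \<open>\<ell>(0) - \<delta>\<close>,
  so some example keeps margin at least \<open>\<delta> / G\<close>. All margins lie in \<open>[-R\<^sup>L, R\<^sup>L]\<close>, where
  \<open>\<ell>' \<le> -c < 0\<close>, so by separability the gradient with respect to \<open>w\<^sub>p\<^sub>r\<^sub>o\<^sub>d\<close> is bounded away from
  zero. The gradient with respect to \<open>W\<^sub>1\<close> is the outer product of that vector with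
  \<open>(W\<^sub>L \<cdots> W\<^sub>2)\<^sup>T\<close>, whose norm is at least the margin divided by \<open>R\<close>; hence \<open>\<parallel>\<nabla>\<R>\<parallel>\<^sup>2\<close> stays
  above a positive constant.\<close>

section \<open>Real analysis\<close>

lemma descent_inequality:
  fixes f f' :: "real \<Rightarrow> real"
  assumes "\<And>s. (f has_real_derivative f' s) (at s)"
    and "\<And>s. 0 \<le> s \<Longrightarrow> s \<le> 1 \<Longrightarrow> f' s - f' 0 \<le> M * s"
  shows "f 1 \<le> f 0 + f' 0 + M / 2"
proof -
  have "(\<lambda>s. f s - f' 0 * s - M / 2 * s\<^sup>2) 1 \<le> (\<lambda>s. f s - f' 0 * s - M / 2 * s\<^sup>2) 0"
  proof (rule DERIV_nonpos_imp_nonincreasing[of 0 1])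
    fix s :: real assume "0 \<le> s" "s \<le> 1"
    then show "\<exists>y. ((\<lambda>s. f s - f' 0 * s - M / 2 * s\<^sup>2) has_real_derivative y) (at s) \<and> y \<le> 0"
      using assms by (auto intro!: derivative_eq_intros exI[of _ "f' s - f' 0 - M * s"])
  qed simp
  then show ?thesis by simp
qed

lemma abs_chain_deriv_diff_le:
  fixes g g' g'' h :: "real \<Rightarrow> real"
  assumes g_deriv: "\<And>s. (g has_real_derivative g' s) (at s)"
    and g'_deriv: "\<And>s. (g' has_real_derivative g'' s) (at s)"
    and bound_g': "\<And>s. 0 \<le> s \<Longrightarrow> s \<le> 1 \<Longrightarrow> \<bar>g' s\<bar> \<le> C"
    and bound_g'': "\<And>s. 0 \<le> s \<Longrightarrow> s \<le> 1 \<Longrightarrow> \<bar>g'' s\<bar> \<le> M"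
    and h_lipschitz: "\<And>a b. \<bar>h a - h b\<bar> \<le> \<beta> * \<bar>a - b\<bar>"
    and h_bounded: "\<And>t. \<bar>h t\<bar> \<le> G"
    and s: "0 \<le> s" "s \<le> 1"
  shows "\<bar>h (g s) * g' s - h (g 0) * g' 0\<bar> \<le> (\<beta> * C\<^sup>2 + G * M) * s"
proof -
  have beta: "0 \<le> \<beta>"
    using h_lipschitz[of 1 0] by simp
  have "\<bar>g s - g 0\<bar> \<le> C * \<bar>s - 0\<bar>"
    using s bound_g' by (intro field_differentiable_bound[of "{0..s}", simplified])
      (auto intro: has_field_derivative_at_within g_deriv)
  then have dg: "\<bar>h (g s) - h (g 0)\<bar> \<le> \<beta> * (C * s)"
    using h_lipschitz[of "g s" "g 0"] beta s by (smt (verit) mult_left_mono)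
  have dg': "\<bar>g' s - g' 0\<bar> \<le> M * s"
    using s bound_g'' field_differentiable_bound[of "{0..s}" g' g'' M s 0]
    by (auto intro: has_field_derivative_at_within g'_deriv)
  have "h (g s) * g' s - h (g 0) * g' 0 = (h (g s) - h (g 0)) * g' s + h (g 0) * (g' s - g' 0)"
    by (simp add: algebra_simps)
  then have "\<bar>h (g s) * g' s - h (g 0) * g' 0\<bar>
      \<le> \<bar>h (g s) - h (g 0)\<bar> * \<bar>g' s\<bar> + \<bar>h (g 0)\<bar> * \<bar>g' s - g' 0\<bar>"
    by (metis abs_mult abs_triangle_ineq)
  also have "\<dots> \<le> \<beta> * (C * s) * C + G * (M * s)"
    using dg dg' bound_g' s h_bounded beta
    by (intro add_mono mult_mono) (auto intro: order_trans[OF abs_ge_zero])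
  finally show ?thesis
    by (simp add: algebra_simps power2_eq_square)
qed

lemma no_uniform_decrease:
  fixes f :: "nat \<Rightarrow> real"
  assumes nonneg: "\<And>t. 0 \<le> f t" and decrease: "\<And>t. f (Suc t) \<le> f t - c" and "0 < c"
  shows False
proof -
  have "f t \<le> f 0 - real t * c" for t
  proof (induction t)
    case (Suc t)
    then show ?case
      using decrease[of t] by (simp add: algebra_simps)
  qed simp
  moreover obtain T where "f 0 / c < real T"
    using reals_Archimedean2 by blast
  ultimately have "f T < 0"
    using \<open>0 < c\<close> by (smt (verit) divide_less_eq)
  with nonneg show False
    by (simp add: not_le[symmetric])
qed

lemma abs_sum_mult_le_L2_set: "\<bar>\<Sum>i\<in>A. f i * g i\<bar> \<le> L2_set f A * L2_set g A"
  by (rule order_trans[OF sum_abs]) (simp add: abs_mult L2_set_mult_ineq)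

lemma abs_le_L2_set: "finite A \<Longrightarrow> i \<in> A \<Longrightarrow> \<bar>f i\<bar> \<le> L2_set f A"
  using member_le_L2_set[of A i "\<lambda>i. \<bar>f i\<bar>"] by (simp add: L2_set_def)

lemma L2_set_matvec_le:
  "L2_set (\<lambda>i. \<Sum>m\<in>J. M i m * h m) I \<le> sqrt (\<Sum>i\<in>I. \<Sum>m\<in>J. (M i m)\<^sup>2) * L2_set h J"
proof -
  have row: "(\<Sum>m\<in>J. M i m * h m)\<^sup>2 \<le> (\<Sum>m\<in>J. (M i m)\<^sup>2) * (L2_set h J)\<^sup>2" for i
  proof -
    have "(\<Sum>m\<in>J. M i m * h m)\<^sup>2 \<le> (L2_set (M i) J * L2_set h J)\<^sup>2"
      using abs_sum_mult_le_L2_set[of "M i" h J] by (metis abs_ge_zero power2_abs power_mono)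
    then show ?thesis
      by (simp add: power_mult_distrib L2_set_def sum_nonneg)
  qed
  have "(\<Sum>i\<in>I. (\<Sum>m\<in>J. M i m * h m)\<^sup>2) \<le> (\<Sum>i\<in>I. (\<Sum>m\<in>J. (M i m)\<^sup>2) * (L2_set h J)\<^sup>2)"
    by (rule sum_mono[OF row])
  also have "\<dots> = (\<Sum>i\<in>I. \<Sum>m\<in>J. (M i m)\<^sup>2) * (L2_set h J)\<^sup>2"
    by (simp add: sum_distrib_right)
  finally have "L2_set (\<lambda>i. \<Sum>m\<in>J. M i m * h m) I \<le> sqrt ((\<Sum>i\<in>I. \<Sum>m\<in>J. (M i m)\<^sup>2) * (L2_set h J)\<^sup>2)"
    unfolding L2_set_def by (rule real_sqrt_le_mono)
  then show ?thesis
    by (simp add: real_sqrt_mult sum_nonneg)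
qed

section \<open>Linear networks\<close>

primrec net_apply :: "(nat \<Rightarrow> nat) \<Rightarrow> network \<Rightarrow> nat \<Rightarrow> (nat \<Rightarrow> real) \<Rightarrow> nat \<Rightarrow> real" where
  "net_apply dm W 0 v i = v i"
| "net_apply dm W (Suc k) v i = (\<Sum>m<dm k. W (Suc k) i m * net_apply dm W k v m)"

text \<open>\<open>net_dderiv dm W D\<close> and \<open>net_dderiv2 dm W D\<close> are the first and second derivatives of
  \<open>s \<mapsto> net_apply dm (W + s D)\<close> at \<open>s = 0\<close>, obtained layer by layer from the product rule.\<close>

primrec net_dderiv :: "(nat \<Rightarrow> nat) \<Rightarrow> network \<Rightarrow> network \<Rightarrow> nat \<Rightarrow> (nat \<Rightarrow> real) \<Rightarrow> nat \<Rightarrow> real" where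
  "net_dderiv dm W D 0 v i = 0"
| "net_dderiv dm W D (Suc k) v i =
     (\<Sum>m<dm k. D (Suc k) i m * net_apply dm W k v m + W (Suc k) i m * net_dderiv dm W D k v m)"

primrec net_dderiv2 :: "(nat \<Rightarrow> nat) \<Rightarrow> network \<Rightarrow> network \<Rightarrow> nat \<Rightarrow> (nat \<Rightarrow> real) \<Rightarrow> nat \<Rightarrow> real" where
  "net_dderiv2 dm W D 0 v i = 0"
| "net_dderiv2 dm W D (Suc k) v i =
     (\<Sum>m<dm k. 2 * D (Suc k) i m * net_dderiv dm W D k v m + W (Suc k) i m * net_dderiv2 dm W D k v m)"

definition net_line :: "network \<Rightarrow> network \<Rightarrow> real \<Rightarrow> network" where
  "net_line W D s = (\<lambda>k i j. W k i j + s * D k i j)"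

lemma net_Suc_ext:
  "net_apply dm W (Suc k) v = (\<lambda>i. \<Sum>m<dm k. W (Suc k) i m * net_apply dm W k v m)"
  "net_dderiv dm W D (Suc k) v =
     (\<lambda>i. \<Sum>m<dm k. D (Suc k) i m * net_apply dm W k v m + W (Suc k) i m * net_dderiv dm W D k v m)"
  "net_dderiv2 dm W D (Suc k) v =
     (\<lambda>i. \<Sum>m<dm k. 2 * D (Suc k) i m * net_dderiv dm W D k v m + W (Suc k) i m * net_dderiv2 dm W D k v m)"
  by (simp_all add: fun_eq_iff)

lemma net_apply_eq_mprod:
  "i < dm k \<Longrightarrow> net_apply dm W k v i = (\<Sum>j<dm 0. mprod dm W k i j * v j)"
proof (induction k arbitrary: i)
  case 0
  then show ?case by (simp add: if_distrib if_distribR cong: if_cong)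
next
  case (Suc k)
  have "net_apply dm W (Suc k) v i = (\<Sum>m<dm k. \<Sum>j<dm 0. W (Suc k) i m * (mprod dm W k m j * v j))"
    by (simp add: Suc sum_distrib_left)
  also have "\<dots> = (\<Sum>j<dm 0. \<Sum>m<dm k. W (Suc k) i m * mprod dm W k m j * v j)"
    by (subst sum.swap) (simp add: mult.assoc)
  also have "\<dots> = (\<Sum>j<dm 0. mprod dm W (Suc k) i j * v j)"
    by (simp add: sum_distrib_right)
  finally show ?case .
qed

lemma risk_eq_net_apply:
  "0 < dm L \<Longrightarrow> risk l n z dm L W = (1 / real n) * (\<Sum>i<n. l (net_apply dm W L (z i) 0))"
  unfolding risk_def wprod_def by (simp add: net_apply_eq_mprod)

lemma has_real_derivative_net_apply_line:
  "((\<lambda>s. net_apply dm (net_line W D s) k v i) has_real_derivative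
     net_dderiv dm (net_line W D s) D k v i) (at s)"
proof (induction k arbitrary: i)
  case (Suc k)
  show ?case
    unfolding net_apply.simps net_dderiv.simps
    by (rule DERIV_sum, unfold net_line_def)
       (rule derivative_eq_intros Suc[unfolded net_line_def] | simp)+
qed simp

lemma has_real_derivative_net_dderiv_line:
  "((\<lambda>s. net_dderiv dm (net_line W D s) D k v i) has_real_derivative
     net_dderiv2 dm (net_line W D s) D k v i) (at s)"
proof (induction k arbitrary: i)
  case (Suc k)
  show ?case
    unfolding net_dderiv.simps net_dderiv2.simps
    by (rule DERIV_sum)
       (rule derivative_eq_intros has_real_derivative_net_apply_line Suc | simp add: net_line_def)+
qed simp

definition unit_net :: "nat \<times> nat \<times> nat \<Rightarrow> network" where
  "unit_net p = (\<lambda>k i j. if (k, i, j) = p then 1 else 0)"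

definition param_idx :: "(nat \<Rightarrow> nat) \<Rightarrow> nat \<Rightarrow> (nat \<times> nat \<times> nat) set" where
  "param_idx dm L = (SIGMA k:{1..L}. SIGMA i:{..<dm k}. {..<dm (k - 1)})"

lemma finite_param_idx [simp]: "finite (param_idx dm L)"
  unfolding param_idx_def by auto

lemma net_line_upd_entry:
  "upd_entry W k i j s = net_line (upd_entry W k i j 0) (unit_net (k, i, j)) s"
  "net_line (upd_entry W k i j 0) (unit_net (k, i, j)) (W k i j) = W"
  unfolding upd_entry_def net_line_def unit_net_def by (auto simp: fun_eq_iff)

lemma net_dderiv_linear:
  "net_dderiv dm W (\<lambda>k i j. c * D k i j + D' k i j) k v i =
     c * net_dderiv dm W D k v i + net_dderiv dm W D' k v i"
  by (induction k arbitrary: i) (simp_all add: algebra_simps sum.distrib sum_distrib_left)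

lemma net_dderiv_sum:
  "finite F \<Longrightarrow> net_dderiv dm W (\<lambda>k i j. \<Sum>p\<in>F. c p * unit_net p k i j) k v i =
     (\<Sum>p\<in>F. c p * net_dderiv dm W (unit_net p) k v i)"
proof (induction F rule: finite_induct)
  case empty
  show ?case by (induction k arbitrary: i) simp_all
next
  case (insert p F)
  then show ?case
    using net_dderiv_linear[of dm W "c p" "unit_net p" "\<lambda>k i j. \<Sum>p\<in>F. c p * unit_net p k i j"]
    by simp
qed

lemma net_dderiv_cong:
  assumes "\<And>q a b. q \<in> {1..k} \<Longrightarrow> a < dm q \<Longrightarrow> b < dm (q - 1) \<Longrightarrow> D q a b = D' q a b"
    and "i < dm k"
  shows "net_dderiv dm W D k v i = net_dderiv dm W D' k v i"
  using assms
proof (induction k arbitrary: i)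
  case (Suc k)
  have "net_dderiv dm W D k v m = net_dderiv dm W D' k v m" if "m < dm k" for m
    using Suc.IH[OF _ that] Suc.prems(1) by auto
  then show ?case
    using Suc.prems by (auto intro!: sum.cong)
qed simp

lemma net_dderiv_expand:
  assumes "i < dm L"
  shows "net_dderiv dm W D L v i =
    (\<Sum>(k, a, b)\<in>param_idx dm L. D k a b * net_dderiv dm W (unit_net (k, a, b)) L v i)"
proof -
  have "D q a b = (\<Sum>p\<in>param_idx dm L. (case p of (k, a, b) \<Rightarrow> D k a b) * unit_net p q a b)"
    if "q \<in> {1..L}" "a < dm q" "b < dm (q - 1)" for q a b
  proof -
    have "(\<Sum>p\<in>param_idx dm L. (case p of (k, a, b) \<Rightarrow> D k a b) * unit_net p q a b)
        = (\<Sum>p\<in>param_idx dm L. if p = (q, a, b) then D q a b else 0)"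
      by (rule sum.cong) (auto simp: unit_net_def)
    also have "\<dots> = D q a b"
      using that by (simp add: param_idx_def)
    finally show ?thesis by simp
  qed
  then have "net_dderiv dm W D L v i =
      net_dderiv dm W (\<lambda>q a b. \<Sum>p\<in>param_idx dm L. (case p of (k, a, b) \<Rightarrow> D k a b) * unit_net p q a b) L v i"
    by (intro net_dderiv_cong assms)
  then show ?thesis
    by (simp add: net_dderiv_sum case_prod_beta')
qed

text \<open>\<open>net_apply_upper dm W k v\<close> applies only the layers \<open>2, \<dots>, k\<close>, i.e. \<open>W\<^sub>k \<cdots> W\<^sub>2 v\<close>.\<close>

primrec net_apply_upper :: "(nat \<Rightarrow> nat) \<Rightarrow> network \<Rightarrow> nat \<Rightarrow> (nat \<Rightarrow> real) \<Rightarrow> nat \<Rightarrow> real" where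
  "net_apply_upper dm W 0 v i = v i"
| "net_apply_upper dm W (Suc k) v i =
     (if k = 0 then v i else (\<Sum>m<dm k. W (Suc k) i m * net_apply_upper dm W k v m))"

definition unit_vec :: "nat \<Rightarrow> nat \<Rightarrow> real" where
  "unit_vec a = (\<lambda>m. if m = a then 1 else 0)"

lemma net_apply_split_first: "1 \<le> k \<Longrightarrow> net_apply dm W k v i = net_apply_upper dm W k (net_apply dm W 1 v) i"
proof (induction k arbitrary: i)
  case (Suc k)
  then show ?case by (cases "k = 0") auto
qed simp

lemma net_apply_upper_expand:
  "1 \<le> k \<Longrightarrow> i < dm k \<Longrightarrow> net_apply_upper dm W k v i = (\<Sum>a<dm 1. v a * net_apply_upper dm W k (unit_vec a) i)"
proof (induction k arbitrary: i)
  case (Suc k)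
  show ?case
  proof (cases "k = 0")
    case True
    have "(\<Sum>a<dm 1. v a * (if i = a then 1 else 0)) = v i"
      using Suc.prems True by (simp add: mult.commute[of "v _"] if_distrib cong: if_cong)
    then show ?thesis
      using True by (simp add: unit_vec_def)
  next
    case False
    then have "net_apply_upper dm W (Suc k) v i
        = (\<Sum>m<dm k. W (Suc k) i m * (\<Sum>a<dm 1. v a * net_apply_upper dm W k (unit_vec a) m))"
      using Suc by simp
    also have "\<dots> = (\<Sum>a<dm 1. v a * net_apply_upper dm W (Suc k) (unit_vec a) i)"
      using False by (simp add: sum_distrib_left sum_distrib_right algebra_simps sum.swap[of _ "{..<dm k}"])
    finally show ?thesis .
  qed
qed simp

lemma net_dderiv_unit_first:
  assumes "1 \<le> k" "b < dm 0"
  shows "net_dderiv dm W (unit_net (1, a, b)) k v i = v b * net_apply_upper dm W k (unit_vec a) i"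
  using assms(1)
proof (induction k arbitrary: i)
  case (Suc k)
  show ?case
  proof (cases "k = 0")
    case True
    have "(\<Sum>m<dm 0. unit_net (1, a, b) 1 i m * v m) = (\<Sum>m<dm 0. if m = b then (if i = a then v b else 0) else 0)"
      by (rule sum.cong) (auto simp: unit_net_def)
    then show ?thesis
      using True assms(2) by (simp add: unit_vec_def)
  next
    case False
    then have "net_dderiv dm W (unit_net (1, a, b)) (Suc k) v i
        = (\<Sum>m<dm k. W (Suc k) i m * (v b * net_apply_upper dm W k (unit_vec a) m))"
      using Suc by (simp add: unit_net_def)
    then show ?thesis
      using False by (simp add: sum_distrib_left algebra_simps)
  qed
qed simp

section \<open>Frobenius norms\<close>

lemma L2_set_layer_le:
  "L2_set (\<lambda>i. \<Sum>m<dm k. W (Suc k) i m * h m) {..<dm (Suc k)} \<le> frob dm W (Suc k) * L2_set h {..<dm k}"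
  using L2_set_matvec_le[of "W (Suc k)" h "{..<dm k}" "{..<dm (Suc k)}"] unfolding frob_def by simp

lemma frob_nonneg: "0 \<le> frob dm W k"
  unfolding frob_def by (simp add: sum_nonneg)

definition net_ball :: "(nat \<Rightarrow> nat) \<Rightarrow> nat \<Rightarrow> real \<Rightarrow> network set" where
  "net_ball dm L R = {W. \<forall>k\<in>{1..L}. frob dm W k \<le> R}"

definition frob_sum :: "(nat \<Rightarrow> nat) \<Rightarrow> network \<Rightarrow> nat \<Rightarrow> real" where
  "frob_sum dm D k = (\<Sum>q\<in>{1..k}. frob dm D q)"

lemma frob_sum_Suc: "frob_sum dm D (Suc k) = frob dm D (Suc k) + frob_sum dm D k"
  unfolding frob_sum_def by (simp add: add.commute)

lemma frob_sum_nonneg: "0 \<le> frob_sum dm D k"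
  unfolding frob_sum_def by (simp add: sum_nonneg frob_nonneg)

lemma net_ball_le: "W \<in> net_ball dm L R \<Longrightarrow> k \<le> L \<Longrightarrow> q \<in> {1..k} \<Longrightarrow> frob dm W q \<le> R"
  unfolding net_ball_def by auto

lemma L2_set_net_apply_le:
  assumes "W \<in> net_ball dm L R" "k \<le> L" "0 \<le> R"
  shows "L2_set (net_apply dm W k v) {..<dm k} \<le> R ^ k * L2_set v {..<dm 0}"
  using assms(2)
proof (induction k)
  case (Suc k)
  have "L2_set (net_apply dm W (Suc k) v) {..<dm (Suc k)} \<le> frob dm W (Suc k) * L2_set (net_apply dm W k v) {..<dm k}"
    unfolding net_Suc_ext by (rule L2_set_layer_le)
  also have "\<dots> \<le> R * (R ^ k * L2_set v {..<dm 0})"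
    using Suc assms(3) net_ball_le[OF assms(1) Suc.prems] by (intro mult_mono) (auto simp: frob_nonneg)
  finally show ?case by (simp only: power_Suc mult.assoc)
qed (simp add: L2_set_def)

lemma L2_set_net_dderiv_le:
  assumes "W \<in> net_ball dm L R" "k \<le> L" "1 \<le> R"
  shows "L2_set (net_dderiv dm W D k v) {..<dm k} \<le> R ^ (k - 1) * frob_sum dm D k * L2_set v {..<dm 0}"
  using assms(2)
proof (induction k)
  case 0
  then show ?case by (simp add: frob_sum_def L2_set_def)
next
  case (Suc k)
  let ?v = "L2_set v {..<dm 0}"
  have "L2_set (net_dderiv dm W D (Suc k) v) {..<dm (Suc k)} \<le>
      L2_set (\<lambda>i. \<Sum>m<dm k. D (Suc k) i m * net_apply dm W k v m) {..<dm (Suc k)}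
    + L2_set (\<lambda>i. \<Sum>m<dm k. W (Suc k) i m * net_dderiv dm W D k v m) {..<dm (Suc k)}"
    unfolding net_Suc_ext sum.distrib by (rule L2_set_triangle_ineq)
  also have "\<dots> \<le> frob dm D (Suc k) * L2_set (net_apply dm W k v) {..<dm k}
      + frob dm W (Suc k) * L2_set (net_dderiv dm W D k v) {..<dm k}"
    by (intro add_mono L2_set_layer_le)
  also have "\<dots> \<le> frob dm D (Suc k) * (R ^ k * ?v) + R * (R ^ (k - 1) * frob_sum dm D k * ?v)"
    using Suc assms L2_set_net_apply_le[OF assms(1), of k v] net_ball_le[OF assms(1) Suc.prems]
    by (intro add_mono mult_mono) (auto simp: frob_nonneg)
  also have "R * (R ^ (k - 1) * frob_sum dm D k * ?v) \<le> R ^ k * frob_sum dm D k * ?v"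
    by (cases k) (simp_all add: frob_sum_def)
  finally show ?case by (simp add: frob_sum_Suc algebra_simps del: net_dderiv.simps)
qed

lemma L2_set_net_dderiv2_le:
  assumes "W \<in> net_ball dm L R" "k \<le> L" "1 \<le> R"
  shows "L2_set (net_dderiv2 dm W D k v) {..<dm k} \<le> 2 * R ^ (k - 1) * (frob_sum dm D k)\<^sup>2 * L2_set v {..<dm 0}"
  using assms(2)
proof (induction k)
  case 0
  then show ?case by (simp add: frob_sum_def L2_set_def)
next
  case (Suc k)
  let ?v = "L2_set v {..<dm 0}"
  let ?S = "frob_sum dm D k"
  let ?a = "frob dm D (Suc k)"
  have frob_double: "frob dm (\<lambda>k i m. 2 * D k i m) (Suc k) = 2 * ?a"
    by (simp add: frob_def power_mult_distrib flip: sum_distrib_left) (simp add: real_sqrt_mult)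
  have "L2_set (net_dderiv2 dm W D (Suc k) v) {..<dm (Suc k)} \<le>
      L2_set (\<lambda>i. \<Sum>m<dm k. 2 * D (Suc k) i m * net_dderiv dm W D k v m) {..<dm (Suc k)}
    + L2_set (\<lambda>i. \<Sum>m<dm k. W (Suc k) i m * net_dderiv2 dm W D k v m) {..<dm (Suc k)}"
    unfolding net_Suc_ext sum.distrib by (rule L2_set_triangle_ineq)
  also have "\<dots> \<le> 2 * ?a * L2_set (net_dderiv dm W D k v) {..<dm k}
      + frob dm W (Suc k) * L2_set (net_dderiv2 dm W D k v) {..<dm k}"
    using L2_set_layer_le[where dm=dm and k=k and W="\<lambda>k i m. 2 * D k i m", unfolded frob_double]
    by (intro add_mono L2_set_layer_le)
  also have "\<dots> \<le> 2 * ?a * (R ^ (k - 1) * ?S * ?v) + R * (2 * R ^ (k - 1) * ?S\<^sup>2 * ?v)"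
    using Suc assms L2_set_net_dderiv_le[OF assms(1), of k D v] net_ball_le[OF assms(1) Suc.prems]
    by (intro add_mono mult_mono) (auto simp: frob_nonneg)
  also have "\<dots> \<le> 2 * ?a * (R ^ k * ?S * ?v) + (R * R ^ (k - 1) * ?S\<^sup>2) * (2 * ?v)"
    using power_increasing[of "k - 1" k R] assms(3)
    by (intro add_mono mult_left_mono mult_right_mono) (auto simp: frob_nonneg frob_sum_nonneg)
  also have "\<dots> \<le> 2 * ?a * (R ^ k * ?S * ?v) + (R ^ k * ?S\<^sup>2) * (2 * ?v)"
    by (rule add_left_mono, rule mult_right_mono) (cases k, simp_all add: frob_sum_def)
  also have "\<dots> = 2 * R ^ k * (?a * ?S + ?S\<^sup>2) * ?v"
    by (simp add: algebra_simps)
  also have "\<dots> \<le> 2 * R ^ k * (?a + ?S)\<^sup>2 * ?v"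
    using frob_nonneg[of dm D "Suc k"] frob_sum_nonneg[of dm D k] assms
    by (intro mult_right_mono mult_left_mono) (auto simp: power2_eq_square algebra_simps)
  finally show ?case by (simp add: frob_sum_Suc del: net_dderiv2.simps)
qed

lemma frob_eq_L2_set: "frob dm W k = L2_set (\<lambda>(i, j). W k i j) ({..<dm k} \<times> {..<dm (k - 1)})"
  unfolding frob_def L2_set_def by (simp add: sum.cartesian_product case_prod_beta)

lemma frob_convex:
  assumes "0 \<le> s" "s \<le> 1"
  shows "frob dm (\<lambda>k i j. (1 - s) * W k i j + s * W' k i j) q \<le> (1 - s) * frob dm W q + s * frob dm W' q"
proof -
  let ?I = "{..<dm q} \<times> {..<dm (q - 1)}"
  have "frob dm (\<lambda>k i j. (1 - s) * W k i j + s * W' k i j) q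
      = L2_set (\<lambda>p. (1 - s) * (case p of (i, j) \<Rightarrow> W q i j) + s * (case p of (i, j) \<Rightarrow> W' q i j)) ?I"
    unfolding frob_eq_L2_set by (rule L2_set_cong) auto
  also have "\<dots> \<le> L2_set (\<lambda>p. (1 - s) * (case p of (i, j) \<Rightarrow> W q i j)) ?I
      + L2_set (\<lambda>p. s * (case p of (i, j) \<Rightarrow> W' q i j)) ?I"
    by (rule L2_set_triangle_ineq)
  also have "\<dots> = (1 - s) * frob dm W q + s * frob dm W' q"
    unfolding frob_eq_L2_set using assms by (simp add: L2_set_right_distrib)
  finally show ?thesis .
qed

lemma net_line_in_net_ball:
  assumes "W \<in> net_ball dm L R" "W' \<in> net_ball dm L R" "0 \<le> s" "s \<le> 1"
  shows "net_line W (\<lambda>k i j. W' k i j - W k i j) s \<in> net_ball dm L R"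
  unfolding net_ball_def
proof (intro CollectI ballI)
  fix q assume q: "q \<in> {1..L}"
  have "net_line W (\<lambda>k i j. W' k i j - W k i j) s = (\<lambda>k i j. (1 - s) * W k i j + s * W' k i j)"
    unfolding net_line_def by (simp add: fun_eq_iff algebra_simps)
  then have "frob dm (net_line W (\<lambda>k i j. W' k i j - W k i j) s) q \<le> (1 - s) * frob dm W q + s * frob dm W' q"
    using frob_convex[OF assms(3,4)] by simp
  also have "\<dots> \<le> (1 - s) * R + s * R"
    using assms q by (intro add_mono mult_left_mono) (auto simp: net_ball_def)
  finally show "frob dm (net_line W (\<lambda>k i j. W' k i j - W k i j) s) q \<le> R"
    by (simp add: algebra_simps)
qed

lemma sum_sq_frob_eq:
  "(\<Sum>q\<in>{1..L}. (frob dm D q)\<^sup>2) = (\<Sum>(k, i, j)\<in>param_idx dm L. (D k i j)\<^sup>2)"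
proof -
  have "(\<Sum>q\<in>{1..L}. (frob dm D q)\<^sup>2) = (\<Sum>q\<in>{1..L}. \<Sum>i<dm q. \<Sum>j<dm (q - 1). (D q i j)\<^sup>2)"
    unfolding frob_def by (simp add: sum_nonneg)
  also have "\<dots> = (\<Sum>q\<in>{1..L}. \<Sum>(i, j)\<in>{..<dm q} \<times> {..<dm (q - 1)}. (D q i j)\<^sup>2)"
    by (simp add: sum.cartesian_product)
  also have "\<dots> = (\<Sum>(k, i, j)\<in>param_idx dm L. (D k i j)\<^sup>2)"
    unfolding param_idx_def by (subst sum.Sigma) auto
  finally show ?thesis .
qed

lemma frob_sum_sq_le: "(frob_sum dm D L)\<^sup>2 \<le> real L * (\<Sum>(k, i, j)\<in>param_idx dm L. (D k i j)\<^sup>2)"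
  using sum_squared_le_sum_of_squares[of "frob dm D" "{1..L}"]
  unfolding frob_sum_def sum_sq_frob_eq by (simp add: mult.commute)

section \<open>The empirical risk\<close>

locale linear_net_risk =
  fixes l dl :: "real \<Rightarrow> real" and n :: nat and z :: "nat \<Rightarrow> nat \<Rightarrow> real"
    and dm :: "nat \<Rightarrow> nat" and L :: nat
  assumes l_deriv: "\<And>t. (l has_real_derivative dl t) (at t)"
    and dm_L_pos: "0 < dm L"
begin

definition risk_line_deriv :: "network \<Rightarrow> network \<Rightarrow> real \<Rightarrow> real" where
  "risk_line_deriv W D s = (1 / real n) *
     (\<Sum>r<n. dl (net_apply dm (net_line W D s) L (z r) 0) * net_dderiv dm (net_line W D s) D L (z r) 0)"

definition risk_grad :: "network \<Rightarrow> nat \<times> nat \<times> nat \<Rightarrow> real" where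
  "risk_grad W p = (1 / real n) *
     (\<Sum>r<n. dl (net_apply dm W L (z r) 0) * net_dderiv dm W (unit_net p) L (z r) 0)"

definition grad_norm_sq :: "network \<Rightarrow> real" where
  "grad_norm_sq W = (\<Sum>p\<in>param_idx dm L. (risk_grad W p)\<^sup>2)"

text \<open>The gradient of the risk with respect to \<open>w\<^sub>p\<^sub>r\<^sub>o\<^sub>d\<close>.\<close>

definition prod_grad :: "network \<Rightarrow> nat \<Rightarrow> real" where
  "prod_grad W b = (1 / real n) * (\<Sum>r<n. dl (net_apply dm W L (z r) 0) * z r b)"

lemma grad_norm_sq_nonneg: "0 \<le> grad_norm_sq W"
  unfolding grad_norm_sq_def by (simp add: sum_nonneg)

lemma has_real_derivative_risk_line:
  "((\<lambda>s. risk l n z dm L (net_line W D s)) has_real_derivative risk_line_deriv W D s) (at s)"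
  unfolding risk_eq_net_apply[where dm=dm and L=L, OF dm_L_pos] risk_line_deriv_def
  by (intro DERIV_cmult DERIV_sum DERIV_chain2[where f=l] l_deriv has_real_derivative_net_apply_line)

lemma grad_entry_risk: "grad_entry (risk l n z dm L) W k i j = risk_grad W (k, i, j)"
proof -
  have "((\<lambda>s. risk l n z dm L (upd_entry W k i j s)) has_real_derivative risk_grad W (k, i, j)) (at (W k i j))"
    using has_real_derivative_risk_line[of "upd_entry W k i j 0" "unit_net (k, i, j)" "W k i j"]
    unfolding risk_line_deriv_def risk_grad_def net_line_upd_entry(2) net_line_upd_entry(1)[symmetric] .
  then show ?thesis
    unfolding grad_entry_def by (rule DERIV_imp_deriv)
qed

lemma risk_line_deriv_0:
  "risk_line_deriv W D 0 = (\<Sum>(k, i, j)\<in>param_idx dm L. D k i j * risk_grad W (k, i, j))"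
proof -
  let ?out = "\<lambda>r. dl (net_apply dm W L (z r) 0)"
  have "net_line W D 0 = W"
    by (simp add: net_line_def)
  then have "risk_line_deriv W D 0 = (1 / real n) * (\<Sum>r<n. ?out r * net_dderiv dm W D L (z r) 0)"
    by (simp add: risk_line_deriv_def)
  also have "\<dots> = (1 / real n) * (\<Sum>r<n. \<Sum>(k, i, j)\<in>param_idx dm L.
      D k i j * (?out r * net_dderiv dm W (unit_net (k, i, j)) L (z r) 0))"
    unfolding net_dderiv_expand[where dm=dm and L=L and D=D, OF dm_L_pos] sum_distrib_left
    by (simp only: case_prod_beta' mult.left_commute)
  also have "\<dots> = (\<Sum>(k, i, j)\<in>param_idx dm L. D k i j * risk_grad W (k, i, j))"
    unfolding risk_grad_def sum_distrib_left
    by (subst sum.swap) (simp only: case_prod_beta' mult.left_commute)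
  finally show ?thesis .
qed

lemma grad_norm_sq_ge_first_layer:
  assumes "1 \<le> L"
  shows "(L2_set (\<lambda>a. net_apply_upper dm W L (unit_vec a) 0) {..<dm 1})\<^sup>2 * (L2_set (prod_grad W) {..<dm 0})\<^sup>2
    \<le> grad_norm_sq W"
proof -
  let ?U = "\<lambda>a. net_apply_upper dm W L (unit_vec a) 0"
  have first: "risk_grad W (1, a, b) = ?U a * prod_grad W b" if "b < dm 0" for a b
    unfolding risk_grad_def prod_grad_def net_dderiv_unit_first[where dm=dm and k=L, OF assms that]
    by (simp add: sum_distrib_left algebra_simps)
  have "(L2_set ?U {..<dm 1})\<^sup>2 * (L2_set (prod_grad W) {..<dm 0})\<^sup>2 = (\<Sum>a<dm 1. \<Sum>b<dm 0. (?U a * prod_grad W b)\<^sup>2)"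
    by (simp add: L2_set_def sum_nonneg power_mult_distrib sum_product)
  also have "\<dots> = (\<Sum>a<dm 1. \<Sum>b<dm 0. (risk_grad W (1, a, b))\<^sup>2)"
    by (intro sum.cong refl) (simp add: first[simplified])
  also have "\<dots> = (\<Sum>(a, b)\<in>{..<dm 1} \<times> {..<dm 0}. (risk_grad W (1, a, b))\<^sup>2)"
    by (rule sum.cartesian_product)
  also have "\<dots> = (\<Sum>p\<in>Pair 1 ` ({..<dm 1} \<times> {..<dm 0}). (risk_grad W p)\<^sup>2)"
    by (subst sum.reindex) (auto simp: inj_on_def case_prod_beta)
  also have "\<dots> \<le> grad_norm_sq W"
    unfolding grad_norm_sq_def using assms
    by (intro sum_mono2) (auto simp: param_idx_def)
  finally show ?thesis .
qed

end

section \<open>Gradient descent on \<open>B(R)\<close>\<close>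

locale smooth_linear_net_risk = linear_net_risk +
  fixes \<beta> G R :: real
  assumes dl_lipschitz: "\<And>a b. \<bar>dl a - dl b\<bar> \<le> \<beta> * \<bar>a - b\<bar>"
    and dl_bounded: "\<And>t. \<bar>dl t\<bar> \<le> G"
    and R_ge_1: "1 \<le> R"
    and z_norm: "\<And>r. r < n \<Longrightarrow> L2_set (z r) {..<dm 0} \<le> 1"
begin

lemma beta_nonneg: "0 \<le> \<beta>"
  using dl_lipschitz[of 1 0] by simp

lemma G_nonneg: "0 \<le> G"
  using dl_bounded[of 0] by simp

lemma abs_output_le:
  assumes "L2_set f {..<dm L} \<le> c * L2_set (z r) {..<dm 0}" "0 \<le> c" "r < n"
  shows "\<bar>f 0\<bar> \<le> c"
proof -
  have "\<bar>f 0\<bar> \<le> L2_set f {..<dm L}"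
    using dm_L_pos by (intro abs_le_L2_set) auto
  also have "\<dots> \<le> c * L2_set (z r) {..<dm 0}"
    by (rule assms(1))
  also have "\<dots> \<le> c * 1"
    using assms z_norm by (intro mult_left_mono) auto
  finally show ?thesis by simp
qed

lemma abs_net_apply_le: "W \<in> net_ball dm L R \<Longrightarrow> r < n \<Longrightarrow> \<bar>net_apply dm W L (z r) 0\<bar> \<le> R ^ L"
  using R_ge_1 by (intro abs_output_le[OF L2_set_net_apply_le]) auto

lemma abs_net_dderiv_le:
  "W \<in> net_ball dm L R \<Longrightarrow> r < n \<Longrightarrow> \<bar>net_dderiv dm W D L (z r) 0\<bar> \<le> R ^ (L - 1) * frob_sum dm D L"
  using R_ge_1 frob_sum_nonneg[of dm D L] by (intro abs_output_le[OF L2_set_net_dderiv_le]) auto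

lemma abs_net_dderiv2_le:
  "W \<in> net_ball dm L R \<Longrightarrow> r < n \<Longrightarrow> \<bar>net_dderiv2 dm W D L (z r) 0\<bar> \<le> 2 * R ^ (L - 1) * (frob_sum dm D L)\<^sup>2"
  using R_ge_1 by (intro abs_output_le[OF L2_set_net_dderiv2_le]) auto

lemma risk_line_deriv_diff_le:
  assumes seg: "\<And>s. 0 \<le> s \<Longrightarrow> s \<le> 1 \<Longrightarrow> net_line W D s \<in> net_ball dm L R"
    and s: "0 \<le> s" "s \<le> 1"
  shows "risk_line_deriv W D s - risk_line_deriv W D 0
    \<le> 2 * (\<beta> + G) * R ^ (2 * (L - 1)) * (frob_sum dm D L)\<^sup>2 * s"
proof -
  let ?S = "frob_sum dm D L"
  define B where "B = \<beta> * (R ^ (L - 1) * ?S)\<^sup>2 + G * (2 * R ^ (L - 1) * ?S\<^sup>2)"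
  have B_nonneg: "0 \<le> B"
    unfolding B_def using beta_nonneg G_nonneg R_ge_1 by simp
  have per_example: "dl (net_apply dm (net_line W D s) L (z r) 0) * net_dderiv dm (net_line W D s) D L (z r) 0
      - dl (net_apply dm (net_line W D 0) L (z r) 0) * net_dderiv dm (net_line W D 0) D L (z r) 0 \<le> B * s"
    if "r < n" for r
    unfolding B_def
    by (rule abs_le_D1, rule abs_chain_deriv_diff_le[OF has_real_derivative_net_apply_line
        has_real_derivative_net_dderiv_line abs_net_dderiv_le abs_net_dderiv2_le dl_lipschitz dl_bounded])
      (use that seg s in auto)
  have "risk_line_deriv W D s - risk_line_deriv W D 0 \<le> (1 / real n) * (\<Sum>r<n. B * s)"
    unfolding risk_line_deriv_def right_diff_distrib[symmetric] sum_subtractf[symmetric]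
    by (intro mult_left_mono sum_mono per_example) auto
  also have "\<dots> \<le> B * s"
    using B_nonneg s by (cases "n = 0") simp_all
  also have "\<dots> \<le> 2 * (\<beta> + G) * R ^ (2 * (L - 1)) * ?S\<^sup>2 * s"
  proof (rule mult_right_mono)
    have square: "(R ^ (L - 1) * ?S)\<^sup>2 = R ^ (2 * (L - 1)) * ?S\<^sup>2"
      by (simp add: power_mult_distrib power_mult[symmetric] mult.commute[of 2])
    have "R ^ (L - 1) \<le> R ^ (2 * (L - 1))"
      using R_ge_1 by (intro power_increasing) auto
    then have "G * (2 * R ^ (L - 1) * ?S\<^sup>2) \<le> G * (2 * R ^ (2 * (L - 1)) * ?S\<^sup>2)"
      using G_nonneg by (intro mult_left_mono mult_right_mono) auto
    moreover have "0 \<le> \<beta> * (R ^ (2 * (L - 1)) * ?S\<^sup>2)"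
      using beta_nonneg R_ge_1 by simp
    ultimately show "B \<le> 2 * (\<beta> + G) * R ^ (2 * (L - 1)) * ?S\<^sup>2"
      unfolding B_def square by (simp add: algebra_simps)
  qed (use s in simp)
  finally show ?thesis .
qed

lemma risk_line_le:
  assumes "\<And>s. 0 \<le> s \<Longrightarrow> s \<le> 1 \<Longrightarrow> net_line W D s \<in> net_ball dm L R"
  shows "risk l n z dm L (net_line W D 1) \<le> risk l n z dm L (net_line W D 0) + risk_line_deriv W D 0
    + (\<beta> + G) * R ^ (2 * (L - 1)) * (frob_sum dm D L)\<^sup>2"
proof -
  have "2 * (\<beta> + G) * R ^ (2 * (L - 1)) * (frob_sum dm D L)\<^sup>2 / 2
      = (\<beta> + G) * R ^ (2 * (L - 1)) * (frob_sum dm D L)\<^sup>2"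
    by simp
  then show ?thesis
    using descent_inequality[OF has_real_derivative_risk_line risk_line_deriv_diff_le[OF assms]]
    by linarith
qed

lemma gd_step_decrease:
  assumes "W \<in> net_ball dm L R" "W' \<in> net_ball dm L R" "0 \<le> \<eta>" "\<eta> * betaR L R \<beta> G \<le> 1"
    and gd_step: "\<And>k i j. (k, i, j) \<in> param_idx dm L \<Longrightarrow> W' k i j = W k i j - \<eta> * risk_grad W (k, i, j)"
  shows "risk l n z dm L W' \<le> risk l n z dm L W - \<eta> / 2 * grad_norm_sq W"
proof -
  define D where "D = (\<lambda>k i j. W' k i j - W k i j)"
  define K where "K = (\<beta> + G) * R ^ (2 * (L - 1))"
  have ends: "net_line W D 0 = W" "net_line W D 1 = W'"
    by (simp_all add: net_line_def D_def)
  have D_step: "D k i j = - \<eta> * risk_grad W (k, i, j)" if "(k, i, j) \<in> param_idx dm L" for k i j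
    using gd_step[OF that] by (simp add: D_def)
  have first_order: "risk_line_deriv W D 0 = - \<eta> * grad_norm_sq W"
    unfolding risk_line_deriv_0 grad_norm_sq_def sum_distrib_left
    by (intro sum.cong refl) (auto simp: D_step power2_eq_square)
  have "(\<Sum>(k, i, j)\<in>param_idx dm L. (D k i j)\<^sup>2) = \<eta>\<^sup>2 * grad_norm_sq W"
    unfolding grad_norm_sq_def sum_distrib_left
    by (intro sum.cong refl) (auto simp: D_step power_mult_distrib)
  then have "(frob_sum dm D L)\<^sup>2 \<le> real L * \<eta>\<^sup>2 * grad_norm_sq W"
    using frob_sum_sq_le[of dm D L] by (simp add: mult.assoc)
  moreover have K_nonneg: "0 \<le> K"
    using beta_nonneg G_nonneg R_ge_1 by (simp add: K_def)
  ultimately have "K * (frob_sum dm D L)\<^sup>2 \<le> K * (real L * \<eta>\<^sup>2 * grad_norm_sq W)"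
    by (rule mult_left_mono)
  also have "\<dots> = (K * real L * \<eta>) * (\<eta> * grad_norm_sq W)"
    by (simp add: power2_eq_square algebra_simps)
  also have "\<dots> \<le> 1 / 2 * (\<eta> * grad_norm_sq W)"
  proof (rule mult_right_mono)
    have "K * real L \<le> K * (real L)\<^sup>2"
      using K_nonneg by (intro mult_left_mono) (cases L, auto simp: power2_eq_square)
    then have "K * real L * \<eta> \<le> K * (real L)\<^sup>2 * \<eta>"
      using assms(3) by (rule mult_right_mono)
    also have "\<dots> = \<eta> * betaR L R \<beta> G / 2"
    proof -
      have "2 * L - 2 = 2 * (L - 1)"
        by simp
      then show ?thesis
        unfolding betaR_def K_def by (simp add: algebra_simps)
    qed
    finally show "K * real L * \<eta> \<le> 1 / 2"
      using assms(4) by linarith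
  qed (use assms(3) grad_norm_sq_nonneg in simp)
  finally show ?thesis
    using risk_line_le[of W D] net_line_in_net_ball[OF assms(1,2)] ends first_order
    unfolding K_def D_def by auto
qed

end

locale separable_linear_net_risk = smooth_linear_net_risk +
  assumes dl_cont: "continuous_on UNIV dl"
    and dl_neg: "\<And>t. dl t < 0"
    and l_tendsto_0: "(l \<longlongrightarrow> 0) at_top"
    and L_pos: "1 \<le> L"
    and n_pos: "0 < n"
    and separable: "\<exists>u. \<forall>r<n. 0 < (\<Sum>j<dm 0. u j * z r j)"
begin

lemma G_pos: "0 < G"
  using dl_bounded[of 0] dl_neg[of 0] by linarith

lemma l_antimono: "x \<le> y \<Longrightarrow> l y \<le> l x"
  using l_deriv dl_neg by (intro DERIV_nonpos_imp_nonincreasing[of x y l]) (auto intro: less_imp_le)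

lemma risk_nonneg: "0 \<le> risk l n z dm L W"
proof -
  have "0 \<le> l t" for t
  proof (rule tendsto_upperbound[OF l_tendsto_0])
    show "\<forall>\<^sub>F y in at_top. l y \<le> l t"
      using eventually_ge_at_top[of t] by eventually_elim (rule l_antimono)
  qed simp
  then show ?thesis
    unfolding risk_eq_net_apply[where dm=dm and L=L, OF dm_L_pos] by (simp add: sum_nonneg)
qed

lemma margin_of_risk_le:
  assumes risk_le: "risk l n z dm L W \<le> l 0 - \<delta>" and "0 < \<delta>"
  shows "\<exists>r<n. \<delta> / G \<le> net_apply dm W L (z r) 0"
proof -
  let ?m = "\<lambda>r. net_apply dm W L (z r) 0"
  have "\<exists>r<n. l (?m r) \<le> l 0 - \<delta>"
  proof (rule ccontr)
    assume "\<not> ?thesis"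
    then have "(\<Sum>r<n. l 0 - \<delta>) < (\<Sum>r<n. l (?m r))"
      using n_pos by (intro sum_strict_mono) auto
    then show False
      using risk_le n_pos unfolding risk_eq_net_apply[where dm=dm and L=L, OF dm_L_pos]
      by (simp add: field_simps)
  qed
  then obtain r where r: "r < n" "l (?m r) \<le> l 0 - \<delta>"
    by blast
  have "0 < ?m r"
    using r \<open>0 < \<delta>\<close> l_antimono[of "?m r" 0] by (cases "?m r \<le> 0") auto
  have "\<bar>l (?m r) - l 0\<bar> \<le> G * \<bar>?m r - 0\<bar>"
    using field_differentiable_bound[of UNIV l dl G "?m r" 0] l_deriv dl_bounded by auto
  then have "\<delta> \<le> G * ?m r"
    using r \<open>0 < ?m r\<close> by (simp add: abs_le_iff)
  then show ?thesis
    using r G_pos by (auto simp: divide_le_eq mult.commute)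
qed

lemma net_apply_le_upper:
  assumes "W \<in> net_ball dm L R" "r < n"
  shows "net_apply dm W L (z r) 0 \<le> R * L2_set (\<lambda>a. net_apply_upper dm W L (unit_vec a) 0) {..<dm 1}"
proof -
  let ?U = "\<lambda>a. net_apply_upper dm W L (unit_vec a) 0"
  have "net_apply dm W L (z r) 0 = (\<Sum>a<dm 1. net_apply dm W 1 (z r) a * ?U a)"
    unfolding net_apply_split_first[OF L_pos] by (rule net_apply_upper_expand[where dm=dm, OF L_pos dm_L_pos])
  also have "\<dots> \<le> L2_set (net_apply dm W 1 (z r)) {..<dm 1} * L2_set ?U {..<dm 1}"
    by (rule order_trans[OF abs_ge_self abs_sum_mult_le_L2_set])
  also have "\<dots> \<le> (R * 1) * L2_set ?U {..<dm 1}"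
  proof (rule mult_right_mono)
    have "L2_set (net_apply dm W 1 (z r)) {..<dm 1} \<le> R ^ 1 * L2_set (z r) {..<dm 0}"
      using assms L_pos R_ge_1 by (intro L2_set_net_apply_le) auto
    also have "\<dots> \<le> R * 1"
      using z_norm[OF assms(2)] R_ge_1 by simp
    finally show "L2_set (net_apply dm W 1 (z r)) {..<dm 1} \<le> R * 1" .
  qed simp
  finally show ?thesis by simp
qed

lemma dl_output_le_neg: "\<exists>c>0. \<forall>W\<in>net_ball dm L R. \<forall>r<n. dl (net_apply dm W L (z r) 0) \<le> - c"
proof -
  have "{- (R ^ L)..R ^ L} \<noteq> {}"
    using R_ge_1 by simp
  then obtain t where t: "\<And>v. v \<in> {- (R ^ L)..R ^ L} \<Longrightarrow> dl v \<le> dl t"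
    using continuous_attains_sup[OF compact_Icc _ continuous_on_subset[OF dl_cont subset_UNIV]] by blast
  show ?thesis
  proof (intro exI[of _ "- dl t"] conjI ballI allI impI)
    fix W r assume "W \<in> net_ball dm L R" "r < n"
    then show "dl (net_apply dm W L (z r) 0) \<le> - (- dl t)"
      using t[of "net_apply dm W L (z r) 0"] abs_net_apply_le[of W r] by (simp add: abs_le_iff)
  qed (use dl_neg in simp)
qed

lemma prod_grad_lower_bound: "\<exists>c>0. \<forall>W\<in>net_ball dm L R. c \<le> L2_set (prod_grad W) {..<dm 0}"
proof -
  obtain c where c: "0 < c" "\<And>W r. W \<in> net_ball dm L R \<Longrightarrow> r < n \<Longrightarrow> dl (net_apply dm W L (z r) 0) \<le> - c"
    using dl_output_le_neg by blast
  obtain u where u: "\<And>r. r < n \<Longrightarrow> 0 < (\<Sum>j<dm 0. u j * z r j)"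
    using separable by blast
  define \<gamma> where "\<gamma> = Min ((\<lambda>r. \<Sum>j<dm 0. u j * z r j) ` {..<n})"
  have \<gamma>_pos: "0 < \<gamma>"
    unfolding \<gamma>_def using n_pos u by (subst Min_gr_iff) auto
  have \<gamma>_le: "\<gamma> \<le> (\<Sum>j<dm 0. u j * z r j)" if "r < n" for r
    unfolding \<gamma>_def using that by (intro Min_le) auto
  have u_pos: "0 < L2_set u {..<dm 0}"
  proof -
    have "L2_set u {..<dm 0} \<noteq> 0"
    proof
      assume "L2_set u {..<dm 0} = 0"
      then have "\<forall>j\<in>{..<dm 0}. u j = 0"
        by (simp add: L2_set_eq_0_iff)
      then show False
        using u[OF n_pos] by simp
    qed
    then show ?thesis
      using L2_set_nonneg[of u "{..<dm 0}"] by linarith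
  qed
  have "c * \<gamma> / L2_set u {..<dm 0} \<le> L2_set (prod_grad W) {..<dm 0}" if W: "W \<in> net_ball dm L R" for W
  proof -
    have "dl (net_apply dm W L (z r) 0) * (\<Sum>j<dm 0. u j * z r j) \<le> - c * \<gamma>" if "r < n" for r
    proof -
      have "dl (net_apply dm W L (z r) 0) * (\<Sum>j<dm 0. u j * z r j) \<le> - c * (\<Sum>j<dm 0. u j * z r j)"
        using c(2)[OF W that] u[OF that] by (intro mult_right_mono) auto
      also have "\<dots> \<le> - c * \<gamma>"
        using \<gamma>_le[OF that] c(1) by simp
      finally show ?thesis .
    qed
    then have "(1 / real n) * (\<Sum>r<n. dl (net_apply dm W L (z r) 0) * (\<Sum>j<dm 0. u j * z r j))
        \<le> (1 / real n) * (\<Sum>r<n. - c * \<gamma>)"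
      by (intro mult_left_mono sum_mono) auto
    also have "\<dots> = - c * \<gamma>"
      using n_pos by simp
    also have "(1 / real n) * (\<Sum>r<n. dl (net_apply dm W L (z r) 0) * (\<Sum>j<dm 0. u j * z r j))
        = (\<Sum>b<dm 0. prod_grad W b * u b)"
      unfolding prod_grad_def sum_distrib_left sum_distrib_right
      by (subst sum.swap) (simp add: algebra_simps)
    finally have "c * \<gamma> \<le> \<bar>\<Sum>b<dm 0. prod_grad W b * u b\<bar>"
      by linarith
    also have "\<dots> \<le> L2_set (prod_grad W) {..<dm 0} * L2_set u {..<dm 0}"
      by (rule abs_sum_mult_le_L2_set)
    finally show ?thesis
      using u_pos by (simp add: divide_le_eq)
  qed
  moreover have "0 < c * \<gamma> / L2_set u {..<dm 0}"
    using c(1) \<gamma>_pos u_pos by simp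
  ultimately show ?thesis
    by blast
qed

lemma grad_norm_sq_lower_bound:
  assumes "0 < m"
  shows "\<exists>c>0. \<forall>W\<in>net_ball dm L R. (\<exists>r<n. m \<le> net_apply dm W L (z r) 0) \<longrightarrow> c \<le> grad_norm_sq W"
proof -
  obtain c where c: "0 < c" "\<And>W. W \<in> net_ball dm L R \<Longrightarrow> c \<le> L2_set (prod_grad W) {..<dm 0}"
    using prod_grad_lower_bound by blast
  have "(m / R * c)\<^sup>2 \<le> grad_norm_sq W"
    if W: "W \<in> net_ball dm L R" and r: "r < n" "m \<le> net_apply dm W L (z r) 0" for W r
  proof -
    have "m / R \<le> L2_set (\<lambda>a. net_apply_upper dm W L (unit_vec a) 0) {..<dm 1}"
      using net_apply_le_upper[OF W r(1)] r(2) R_ge_1 by (simp add: divide_le_eq mult.commute)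
    then have "(m / R * c)\<^sup>2 \<le> (L2_set (\<lambda>a. net_apply_upper dm W L (unit_vec a) 0) {..<dm 1})\<^sup>2
        * (L2_set (prod_grad W) {..<dm 0})\<^sup>2"
      unfolding power_mult_distrib using assms R_ge_1 c(1) c(2)[OF W] by (intro mult_mono power_mono) auto
    also have "\<dots> \<le> grad_norm_sq W"
      by (rule grad_norm_sq_ge_first_layer[OF L_pos])
    finally show ?thesis .
  qed
  moreover have "0 < (m / R * c)\<^sup>2"
    using assms R_ge_1 c(1) by simp
  ultimately show ?thesis
    by blast
qed

lemma betaR_pos: "0 < betaR L R \<beta> G"
  using L_pos R_ge_1 beta_nonneg G_pos unfolding betaR_def by simp

lemma gd_leaves_net_ball:
  assumes gd: "\<And>t k i j. (k, i, j) \<in> param_idx dm L \<Longrightarrow>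
      Wt (Suc t) k i j = Wt t k i j - 1 / betaR L R \<beta> G * risk_grad (Wt t) (k, i, j)"
    and risk_0: "risk l n z dm L (Wt 0) \<le> l 0"
    and grad_0: "0 < grad_norm_sq (Wt 0)"
  shows "\<exists>t. Wt t \<notin> net_ball dm L R"
proof (rule ccontr)
  assume "\<not> ?thesis"
  then have bounded: "Wt t \<in> net_ball dm L R" for t
    by blast
  define \<eta> where "\<eta> = 1 / betaR L R \<beta> G"
  have \<eta>: "0 < \<eta>" "\<eta> * betaR L R \<beta> G \<le> 1"
    using betaR_pos by (simp_all add: \<eta>_def)
  have descent: "risk l n z dm L (Wt (Suc t)) \<le> risk l n z dm L (Wt t) - \<eta> / 2 * grad_norm_sq (Wt t)" for t
    using \<eta> gd by (intro gd_step_decrease bounded) (auto simp: \<eta>_def)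
  then have "decseq (\<lambda>t. risk l n z dm L (Wt t))"
    using \<eta>(1) by (intro decseq_SucI order_trans[OF descent]) (simp add: grad_norm_sq_nonneg)
  define \<delta> where "\<delta> = l 0 - risk l n z dm L (Wt 1)"
  have "0 < \<delta>"
    using descent[of 0] mult_pos_pos[OF \<eta>(1) grad_0] risk_0 unfolding \<delta>_def by simp
  have "risk l n z dm L (Wt (Suc t)) \<le> l 0 - \<delta>" for t
    using decseqD[OF \<open>decseq _\<close>, of 1 "Suc t"] unfolding \<delta>_def by simp
  then have "\<exists>r<n. \<delta> / G \<le> net_apply dm (Wt (Suc t)) L (z r) 0" for t
    using margin_of_risk_le \<open>0 < \<delta>\<close> by blast
  then obtain c where c: "0 < c" "\<And>t. c \<le> grad_norm_sq (Wt (Suc t))"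
    using grad_norm_sq_lower_bound[of "\<delta> / G"] \<open>0 < \<delta>\<close> G_pos bounded by force
  show False
  proof (rule no_uniform_decrease[of "\<lambda>t. risk l n z dm L (Wt (Suc t))" "\<eta> / 2 * c"])
    fix t
    have "\<eta> / 2 * c \<le> \<eta> / 2 * grad_norm_sq (Wt (Suc t))"
      using \<eta>(1) c(2) by (intro mult_left_mono) auto
    then show "risk l n z dm L (Wt (Suc (Suc t))) \<le> risk l n z dm L (Wt (Suc t)) - \<eta> / 2 * c"
      using descent[of "Suc t"] by linarith
  qed (use risk_nonneg \<eta>(1) c(1) in auto)
qed

end

theorem mainTheorem9:
  fixes l dl :: "real \<Rightarrow> real"
    and n d L :: nat
    and dm :: "nat \<Rightarrow> nat"
    and x :: "nat \<Rightarrow> nat \<Rightarrow> real"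
    and y :: "nat \<Rightarrow> real"
    and \<beta> G R :: real
    and Wt :: "nat \<Rightarrow> network"
  assumes L_pos: "L \<ge> 1"
    and dims: "dm 0 = d" "dm L = 1" "\<forall>k\<le>L. dm k \<ge> 1"
    and labels: "\<forall>i<n. y i = 1 \<or> y i = -1"
    and x_norm: "\<forall>i<n. sqrt (\<Sum>j<d. (x i j)\<^sup>2) \<le> 1"
    and separable: "\<exists>u :: nat \<Rightarrow> real. \<forall>i<n. (\<Sum>j<d. u j * (y i * x i j)) > 0"
    \<comment> \<open>Assumption 1\<close>
    and A1_deriv: "\<forall>t. (l has_real_derivative dl t) (at t)"
    and A1_cont: "continuous_on UNIV dl"
    and A1_neg: "\<forall>t. dl t < 0"
    and A1_bot: "filterlim l at_top at_bot"
    and A1_top: "(l \<longlongrightarrow> 0) at_top"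
    \<comment> \<open>Assumption 4\<close>
    and A4_lip: "\<forall>a b. \<bar>dl a - dl b\<bar> \<le> \<beta> * \<bar>a - b\<bar>"
    and A4_bnd: "\<forall>t. \<bar>dl t\<bar> \<le> G"
    \<comment> \<open>Assumption 2\<close>
    and A2_grad: "\<exists>k\<in>{1..L}. \<exists>i<dm k. \<exists>j<dm (k - 1).
                    grad_entry (risk l n (\<lambda>i j. y i * x i j) dm L) (Wt 0) k i j \<noteq> 0"
    and A2_risk: "risk l n (\<lambda>i j. y i * x i j) dm L (Wt 0) \<le> l 0"
    \<comment> \<open>R \<ge> 1 and gradient descent with step size 1 / beta(R)\<close>
    and R_ge: "R \<ge> 1"
    and GD: "\<forall>t. \<forall>k\<in>{1..L}. \<forall>i<dm k. \<forall>j<dm (k - 1).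
               Wt (Suc t) k i j = Wt t k i j - (1 / betaR L R \<beta> G) *
                 grad_entry (risk l n (\<lambda>i j. y i * x i j) dm L) (Wt t) k i j"
  shows "\<exists>t. \<exists>k\<in>{1..L}. frob dm (Wt t) k > R"
proof -
  define z where "z = (\<lambda>i j. y i * x i j)"
  have "L2_set (z r) {..<dm 0} \<le> 1" if "r < n" for r
  proof -
    have "(\<Sum>j<d. (z r j)\<^sup>2) = (\<Sum>j<d. (x r j)\<^sup>2)"
      using labels that unfolding z_def by (auto simp: power_mult_distrib)
    then show ?thesis
      using x_norm that dims(1) unfolding L2_set_def by simp
  qed
  then interpret smooth_linear_net_risk l dl n z dm L \<beta> G R
    using A1_deriv dims A4_lip A4_bnd R_ge by unfold_locales auto
  obtain k i j where kij: "(k, i, j) \<in> param_idx dm L" "risk_grad (Wt 0) (k, i, j) \<noteq> 0"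
    using A2_grad[folded z_def] unfolding grad_entry_risk param_idx_def by blast
  then have "0 < n" "0 < grad_norm_sq (Wt 0)"
    unfolding grad_norm_sq_def by (auto simp: risk_grad_def intro!: sum_pos2[OF _ kij(1)])
  interpret separable_linear_net_risk l dl n z dm L \<beta> G R
    using A1_cont A1_neg A1_top L_pos \<open>0 < n\<close> separable dims by unfold_locales (auto simp: z_def)
  have "\<exists>t. Wt t \<notin> net_ball dm L R"
    using GD[folded z_def] A2_risk[folded z_def] \<open>0 < grad_norm_sq (Wt 0)\<close>
    by (intro gd_leaves_net_ball) (auto simp: param_idx_def grad_entry_risk)
  then show ?thesis
    by (auto simp: net_ball_def not_le)
qed

end
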